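(* Let $\mathcal{C}$ be a class of $\Sigma$-algebras, let $X \subseteq \dot\Sigma$ be a finite set, and let $<$ be a well-founded binary relation on $X^*$ such that (i) $<$ is compatible with concatenation ($w < w'$ implies $u w v < u w' v$ for all $u,v\in X^*$), and (ii) $<$ has no infinite antichains. Then the following are equivalent: (1) there is a finite set $\{(u_i, w_i) \mid i \in I\}$ of pairs of words in $X^*$ with $u_i < w_i$ and $u_i\ \dot\sim_{\mathcal{C}}\ w_i$ for all $i$, such that the language $X^*\big(\bigcup_{i\in I} w_i\big)X^*$ over the alphabet $X$ is cofinite (its complement in $X^*$ is finite); (2) $X^*/{\dot\sim_{\mathcal{C}}}$ is finite.
   Context: $\Sigma$ is a finite algebraic signature and $V$ a non-empty finite set of variables; $\Sigma$-terms over $V$, and $\Sigma$-algebras have non-empty finite universes; $t \sim_{\mathcal{C}} s$ iff $t,s$ evaluate equally under all valuations in all algebras in $\mathcal{C}$. $\mathrm{vo}(t)$ is the number of variable occurrences in $t$. $\dot\Sigma$ is the set of characters $f(t_1,\dots,t_{i-1},\_,t_{i+1},\dots,t_n)$ where $f\in\Sigma$ is $n$-ary, $i\in\{1,\dots,n\}$, and each $t_j$ ($j\ne i$) has $\mathrm{vo}(t_j)=0$. For a word $w\in\dot\Sigma^*$, $w[t]$ is defined by $\varepsilon[t]=t$ and $(f(t_1,\dots,\_,\dots,t_n)\,w')[t] = f(t_1,\dots,t_{i-1},w'[t],t_{i+1},\dots,t_n)$. $w\ \dot\sim_{\mathcal{C}}\ w'$ iff $w[a]\sim_{\mathcal{C}}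 w'[a]$ for any variable $a\in V$. *)

theory Defs
  imports Main
begin

datatype ('f, 'v) trm = Var 'v | Fun 'f "('f, 'v) trm list"

fun wf_trm :: "'f set \<Rightarrow> ('f \<Rightarrow> nat) \<Rightarrow> 'v set \<Rightarrow> ('f, 'v) trm \<Rightarrow> bool" where
  "wf_trm Sig ar V (Var x) = (x \<in> V)"
| "wf_trm Sig ar V (Fun f ts) = (f \<in> Sig \<and> length ts = ar f \<and> (\<forall>t\<in>set ts. wf_trm Sig ar V t))"

fun vo :: "('f, 'v) trm \<Rightarrow> nat" where
  "vo (Var x) = 1"
| "vo (Fun f ts) = sum_list (map vo ts)"

type_synonym ('f, 'a) alg = "'a set \<times> ('f \<Rightarrow> 'a list \<Rightarrow> 'a)"

definition is_algebra :: "'f set \<Rightarrow> ('f \<Rightarrow> nat) \<Rightarrow> ('f, 'a) alg \<Rightarrow> bool" where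
  "is_algebra Sig ar A \<longleftrightarrow> finite (fst A) \<and> fst A \<noteq> {} \<and>
     (\<forall>f\<in>Sig. \<forall>xs. length xs = ar f \<longrightarrow> set xs \<subseteq> fst A \<longrightarrow> snd A f xs \<in> fst A)"

fun eval :: "('f \<Rightarrow> 'a list \<Rightarrow> 'a) \<Rightarrow> ('v \<Rightarrow> 'a) \<Rightarrow> ('f, 'v) trm \<Rightarrow> 'a" where
  "eval I \<alpha> (Var x) = \<alpha> x"
| "eval I \<alpha> (Fun f ts) = I f (map (eval I \<alpha>) ts)"

definition term_equiv :: "'v set \<Rightarrow> ('f, 'a) alg set \<Rightarrow> ('f, 'v) trm \<Rightarrow> ('f, 'v) trm \<Rightarrow> bool" where
  "term_equiv V C t s \<longleftrightarrow>
     (\<forall>A\<in>C. \<forall>\<alpha>. (\<forall>x\<in>V. \<alpha> x \<in> fst A) \<longrightarrow> eval (snd A) \<alpha> t = eval (snd A) \<alpha> s)"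

text \<open>Ctx f l r stands for f(l_1,...,l_{i-1}, _, r_1, ...), the hole at position i = length l + 1.\<close>
datatype ('f, 'v) chr = Ctx 'f "('f, 'v) trm list" "('f, 'v) trm list"

definition chars :: "'f set \<Rightarrow> ('f \<Rightarrow> nat) \<Rightarrow> 'v set \<Rightarrow> ('f, 'v) chr set" where
  "chars Sig ar V = {Ctx f l r | f l r. f \<in> Sig \<and> ar f = length l + 1 + length r \<and>
      (\<forall>t\<in>set l \<union> set r. wf_trm Sig ar V t \<and> vo t = 0)}"

fun plug :: "('f, 'v) chr list \<Rightarrow> ('f, 'v) trm \<Rightarrow> ('f, 'v) trm" where
  "plug [] t = t"
| "plug (Ctx f l r # w) t = Fun f (l @ [plug w t] @ r)"

definition word_equiv :: "'v set \<Rightarrow> ('f, 'a) alg set \<Rightarrow> ('f, 'v) chr list \<Rightarrow> ('f, 'v) chr list \<Rightarrow> bool" where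
  "word_equiv V C w w' \<longleftrightarrow> (\<forall>a\<in>V. term_equiv V C (plug w (Var a)) (plug w' (Var a)))"

end

theory Submission
  imports Defs
begin

text \<open>
  (1) \<Longrightarrow> (2): a word containing some w_i as a factor can be rewritten to the \<sim>-equivalent,
  strictly \<open><\<close>-smaller word with u_i in its place. By well-foundedness every word is therefore
  equivalent to a word avoiding all w_i, and these form a finite set.

  (2) \<Longrightarrow> (1): the words that are \<open><\<close>-minimal in their class form an antichain inside each of the
  finitely many classes, so there are finitely many of them, all of length at most some K.
  Pair every other word of length at most K + 1 with a smaller equivalent word. Any word that is
  not minimal either is itself one of these right-hand sides or has one as a prefix of
  length K + 1, so only the finitely many minimal words avoid them.
\<close>

definition words_with_factor :: "'a set \<Rightarrow> 'a list set \<Rightarrow> 'a list set" where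
  "words_with_factor X W = {x @ w @ y | x w y. x \<in> lists X \<and> y \<in> lists X \<and> w \<in> W}"

definition class_minimal :: "('a \<times> 'a) set \<Rightarrow> ('a \<times> 'a) set \<Rightarrow> 'a set \<Rightarrow> 'a set" where
  "class_minimal R E A = {w \<in> A. \<not> (\<exists>u. (u, w) \<in> R \<inter> E)}"

lemma plug_append: "plug (x @ y) t = plug x (plug y t)"
proof (induction x)
  case (Cons c x) then show ?case by (cases c) simp
qed simp

lemma eval_plug_cong: "eval I \<alpha> s = eval I \<alpha> s' \<Longrightarrow> eval I \<alpha> (plug x s) = eval I \<alpha> (plug x s')"
proof (induction x)
  case (Cons c x) then show ?case by (cases c) simp
qed simp

lemma eval_vo_zero: "vo t = 0 \<Longrightarrow> eval I \<alpha> t = eval I \<beta> t"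
proof (induction t)
  case (Fun f ts)
  then have "\<forall>s\<in>set ts. vo s = 0" by (simp add: sum_list_eq_0_iff)
  with Fun show ?case by (simp cong: map_cong)
qed simp

lemma eval_plug:
  assumes "set w \<subseteq> chars Sig ar V"
  shows "eval I \<alpha> (plug w t) = eval I (\<alpha>(a := eval I \<alpha> t)) (plug w (Var a))"
  using assms
proof (induction w)
  case (Cons c w)
  obtain f l r where c: "c = Ctx f l r" by (cases c)
  with Cons.prems have "\<forall>s\<in>set l \<union> set r. vo s = 0" by (auto simp: chars_def)
  then have l: "map (eval I \<alpha>) l = map (eval I (\<alpha>(a := eval I \<alpha> t))) l"
    and r: "map (eval I \<alpha>) r = map (eval I (\<alpha>(a := eval I \<alpha> t))) r"
    by (auto intro: eval_vo_zero)
  have IH: "eval I \<alpha> (plug w t) = eval I (\<alpha>(a := eval I \<alpha> t)) (plug w (Var a))"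
    using Cons by (simp add: fun_upd_def)
  show ?case unfolding c plug.simps eval.simps map_append list.map l r IH ..
qed simp

lemma eval_in_carrier:
  assumes "is_algebra Sig ar A" and "\<forall>x\<in>V. \<alpha> x \<in> fst A"
  shows "wf_trm Sig ar V t \<Longrightarrow> eval (snd A) \<alpha> t \<in> fst A"
proof (induction t)
  case (Fun f ts)
  then have "set (map (eval (snd A) \<alpha>) ts) \<subseteq> fst A" by auto
  with Fun.prems assms(1) show ?case by (auto simp: is_algebra_def)
qed (use assms in simp)

lemma wf_trm_plug_Var:
  assumes "set w \<subseteq> chars Sig ar V" and "a \<in> V"
  shows "wf_trm Sig ar V (plug w (Var a))"
  using assms
proof (induction w)
  case (Cons c w)
  then show ?case by (cases c) (auto simp: chars_def)
qed simp

lemma equiv_word_equiv: "equiv W {(w, w'). w \<in> W \<and> w' \<in> W \<and> word_equiv V C w w'}"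
  by (rule equivI) (auto simp: refl_on_def sym_def trans_def word_equiv_def term_equiv_def)

text \<open>Plugging y[a] into u and w amounts to evaluating u[a] and w[a] under the valuation
  updated at a by the value of y[a], which lies in the algebra since y[a] is well-formed.\<close>
lemma word_equiv_append_cong:
  assumes alg: "\<forall>A\<in>C. is_algebra Sig ar A"
    and u: "set u \<subseteq> chars Sig ar V" and w: "set w \<subseteq> chars Sig ar V"
    and y: "set y \<subseteq> chars Sig ar V"
    and uw: "word_equiv V C u w"
  shows "word_equiv V C (x @ u @ y) (x @ w @ y)"
  unfolding word_equiv_def term_equiv_def
proof (intro ballI allI impI)
  fix a A \<alpha> assume a: "a \<in> V" and A: "A \<in> C" and \<alpha>: "\<forall>x\<in>V. \<alpha> x \<in> fst A"
  define t where "t = plug y (Var a)"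
  have "eval (snd A) \<alpha> t \<in> fst A"
    unfolding t_def using y a alg A \<alpha> by (blast intro: eval_in_carrier wf_trm_plug_Var)
  with \<alpha> have "\<forall>x\<in>V. (\<alpha>(a := eval (snd A) \<alpha> t)) x \<in> fst A" by simp
  with uw a A have "eval (snd A) (\<alpha>(a := eval (snd A) \<alpha> t)) (plug u (Var a)) =
      eval (snd A) (\<alpha>(a := eval (snd A) \<alpha> t)) (plug w (Var a))"
    unfolding word_equiv_def term_equiv_def by blast
  then have "eval (snd A) \<alpha> (plug u t) = eval (snd A) \<alpha> (plug w t)"
    using eval_plug[OF u] eval_plug[OF w] by metis
  then have "eval (snd A) \<alpha> (plug x (plug u t)) = eval (snd A) \<alpha> (plug x (plug w t))"
    by (rule eval_plug_cong)
  then show "eval (snd A) \<alpha> (plug (x @ u @ y) (Var a)) = eval (snd A) \<alpha> (plug (x @ w @ y) (Var a))"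
    by (simp add: plug_append t_def)
qed

lemma exists_equiv_word_avoiding_factors:
  assumes E: "equiv (lists X) E"
    and E_cong: "\<And>u w x y. (u, w) \<in> E \<Longrightarrow> x \<in> lists X \<Longrightarrow> y \<in> lists X \<Longrightarrow> (x @ u @ y, x @ w @ y) \<in> E"
    and "wf R"
    and R_cong: "\<And>u w x y. (u, w) \<in> R \<Longrightarrow> x \<in> lists X \<Longrightarrow> y \<in> lists X \<Longrightarrow> (x @ u @ y, x @ w @ y) \<in> R"
    and P: "P \<subseteq> R \<inter> E"
    and "w \<in> lists X"
  shows "\<exists>f \<in> lists X - words_with_factor X (snd ` P). (w, f) \<in> E"
  using \<open>wf R\<close> \<open>w \<in> lists X\<close>
proof (induction w rule: wf_induct_rule)
  case (less w)
  show ?case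
  proof (cases "w \<in> words_with_factor X (snd ` P)")
    case False
    moreover have "(w, w) \<in> E"
      using E less.prems by (simp add: equiv_def refl_on_def)
    ultimately show ?thesis using less.prems by blast
  next
    case True
    then obtain x u v y where w: "w = x @ v @ y" and xy: "x \<in> lists X" "y \<in> lists X"
      and uv: "(u, v) \<in> P"
      unfolding words_with_factor_def by force
    with P R_cong have "(x @ u @ y, w) \<in> R" by blast
    moreover from uv P E_cong xy w have uw: "(x @ u @ y, w) \<in> E" by blast
    moreover from uw E have "x @ u @ y \<in> lists X" by (meson equiv_class_eq_iff)
    ultimately obtain f where "f \<in> lists X - words_with_factor X (snd ` P)" "(x @ u @ y, f) \<in> E"
      using less.IH by blast
    with uw E show ?thesis by (meson equivE symE transE)
  qed
qed

lemma finite_quotient_if_finite_avoiding: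
  assumes E: "equiv (lists X) E"
    and E_cong: "\<And>u w x y. (u, w) \<in> E \<Longrightarrow> x \<in> lists X \<Longrightarrow> y \<in> lists X \<Longrightarrow> (x @ u @ y, x @ w @ y) \<in> E"
    and "wf R"
    and R_cong: "\<And>u w x y. (u, w) \<in> R \<Longrightarrow> x \<in> lists X \<Longrightarrow> y \<in> lists X \<Longrightarrow> (x @ u @ y, x @ w @ y) \<in> R"
    and "P \<subseteq> R \<inter> E"
    and fin: "finite (lists X - words_with_factor X (snd ` P))"
  shows "finite (lists X // E)"
proof -
  have "lists X // E \<subseteq> (\<lambda>f. E `` {f}) ` (lists X - words_with_factor X (snd ` P))"
  proof
    fix c assume "c \<in> lists X // E"
    then obtain w where c: "c = E `` {w}" and w: "w \<in> lists X" by (rule quotientE)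
    then obtain f where "f \<in> lists X - words_with_factor X (snd ` P)" "(w, f) \<in> E"
      using exists_equiv_word_avoiding_factors[OF assms(1-5)] by blast
    with c E show "c \<in> (\<lambda>f. E `` {f}) ` (lists X - words_with_factor X (snd ` P))"
      by (auto simp: equiv_class_eq_iff)
  qed
  with fin show ?thesis by (meson finite_imageI finite_subset)
qed

lemma finite_class_minimal:
  assumes E: "equiv A E" and "finite (A // E)"
    and antichain: "\<forall>S. S \<subseteq> A \<longrightarrow> (\<forall>x\<in>S. \<forall>y\<in>S. x \<noteq> y \<longrightarrow> (x, y) \<notin> R \<and> (y, x) \<notin> R) \<longrightarrow> finite S"
  shows "finite (class_minimal R E A)"
proof -
  have "finite (c \<inter> class_minimal R E A)" if "c \<in> A // E" for c
  proof -
    have "(x, y) \<in> E" if "x \<in> c" "y \<in> c" for x y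
      using E \<open>c \<in> A // E\<close> that by (meson quotient_eq_iff)
    then have "\<forall>x \<in> c \<inter> class_minimal R E A. \<forall>y \<in> c \<inter> class_minimal R E A.
        x \<noteq> y \<longrightarrow> (x, y) \<notin> R \<and> (y, x) \<notin> R"
      unfolding class_minimal_def by blast
    moreover have "c \<inter> class_minimal R E A \<subseteq> A"
      unfolding class_minimal_def by blast
    ultimately show ?thesis
      using antichain by blast
  qed
  then have "finite (\<Union>c \<in> A // E. c \<inter> class_minimal R E A)"
    using \<open>finite (A // E)\<close> by blast
  moreover have "class_minimal R E A = (\<Union>c \<in> A // E. c \<inter> class_minimal R E A)"
    using Union_quotient[OF E] unfolding class_minimal_def by blast
  ultimately show ?thesis by simp
qed

lemma exists_rules_finite_avoiding:
  assumes "finite X" and fin: "finite (class_minimal R E (lists X))"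
  shows "\<exists>P. finite P \<and> P \<subseteq> R \<inter> E \<and> finite (lists X - words_with_factor X (snd ` P))"
proof -
  let ?M = "class_minimal R E (lists X)"
  define K where "K = Max (length ` ?M)"
  have K: "length w \<le> K" if "w \<in> ?M" for w
    unfolding K_def using fin that by (intro Max_ge) simp_all
  define N where "N = {w \<in> lists X - ?M. length w \<le> Suc K}"
  have reducible: "\<forall>w \<in> lists X - ?M. \<exists>u. (u, w) \<in> R \<inter> E"
    unfolding class_minimal_def by blast
  obtain smaller where smaller: "\<forall>w \<in> lists X - ?M. (smaller w, w) \<in> R \<inter> E"
    using bchoice[OF reducible] by blast
  define P where "P = (\<lambda>w. (smaller w, w)) ` N"
  have "finite N"
    using finite_lists_length_le[OF \<open>finite X\<close>, of "Suc K"] unfolding N_def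
    by (rule finite_subset[rotated]) auto
  then have "finite P" unfolding P_def by simp
  moreover have "P \<subseteq> R \<inter> E"
    unfolding P_def N_def using smaller by blast
  moreover have "lists X - words_with_factor X (snd ` P) \<subseteq> ?M"
  proof
    fix w assume w: "w \<in> lists X - words_with_factor X (snd ` P)"
    have snd_P: "snd ` P = N" unfolding P_def by force
    show "w \<in> ?M"
    proof (rule ccontr)
      assume "w \<notin> ?M"
      have "take (Suc K) w \<in> N"
      proof (cases "length w \<le> Suc K")
        case True
        with \<open>w \<notin> ?M\<close> w show ?thesis unfolding N_def by simp
      next
        case False
        then have "take (Suc K) w \<notin> ?M" using K by fastforce
        with w show ?thesis unfolding N_def by (auto dest: in_set_takeD)
      qed
      moreover have "w = [] @ take (Suc K) w @ drop (Suc K) w" "drop (Suc K) w \<in> lists X"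
        using w by (auto dest: in_set_dropD)
      ultimately show False
        using w snd_P unfolding words_with_factor_def by blast
    qed
  qed
  ultimately show ?thesis
    using fin finite_subset by blast
qed

theorem lemma2p15:
  fixes Sig :: "'f set" and ar :: "'f \<Rightarrow> nat" and V :: "'v set"
    and C :: "('f, 'a) alg set" and X :: "('f, 'v) chr set"
    and R :: "(('f, 'v) chr list \<times> ('f, 'v) chr list) set"
  assumes "finite Sig" and "finite V" and "V \<noteq> {}"
    and "\<forall>A\<in>C. is_algebra Sig ar A"
    and "X \<subseteq> chars Sig ar V" and "finite X"
    and "R \<subseteq> lists X \<times> lists X" and "wf R"
    and "\<forall>w w' u v. (w, w') \<in> R \<longrightarrow> u \<in> lists X \<longrightarrow> v \<in> lists X \<longrightarrow> (u @ w @ v, u @ w' @ v) \<in> R"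
    and "\<forall>S. S \<subseteq> lists X \<longrightarrow> (\<forall>x\<in>S. \<forall>y\<in>S. x \<noteq> y \<longrightarrow> (x, y) \<notin> R \<and> (y, x) \<notin> R) \<longrightarrow> finite S"
  shows "(\<exists>P. finite P \<and> (\<forall>(u, w)\<in>P. (u, w) \<in> R \<and> word_equiv V C u w) \<and>
            finite (lists X - {x @ w @ y | x w y. x \<in> lists X \<and> y \<in> lists X \<and> w \<in> snd ` P}))
         \<longleftrightarrow> finite (lists X // {(w, w'). w \<in> lists X \<and> w' \<in> lists X \<and> word_equiv V C w w'})"
proof -
  let ?E = "{(w, w'). w \<in> lists X \<and> w' \<in> lists X \<and> word_equiv V C w w'}"
  have E: "equiv (lists X) ?E"
    by (rule equiv_word_equiv)
  have chars: "set w \<subseteq> chars Sig ar V" if "w \<in> lists X" for w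
    using that assms(5) by auto
  have E_cong: "(x @ u @ y, x @ w @ y) \<in> ?E"
    if "(u, w) \<in> ?E" "x \<in> lists X" "y \<in> lists X" for u w x y
    using that word_equiv_append_cong[OF assms(4) chars chars chars] by auto
  have R_cong: "(x @ u @ y, x @ w @ y) \<in> R"
    if "(u, w) \<in> R" "x \<in> lists X" "y \<in> lists X" for u w x y
    using that assms(9) by blast
  have rules: "(\<forall>(u, w)\<in>P. (u, w) \<in> R \<and> word_equiv V C u w) \<longleftrightarrow> P \<subseteq> R \<inter> ?E" for P
    using assms(7) by auto
  show ?thesis
    unfolding rules words_with_factor_def[symmetric]
    using finite_quotient_if_finite_avoiding[OF E E_cong assms(8) R_cong]
      exists_rules_finite_avoiding[OF assms(6) finite_class_minimal[OF E _ assms(10)]]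
    by blast
qed

end
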